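(* Let $n,r,k$ be positive integers with $n\ge 2r$. Then $\gamma_{\times k,t}(K(n,r))=k+r$ if and only if $n\ge r(k+r)$. Moreover, for every $n\ge r(k+r)$, every $k$-tuple total dominating set of $K(n,r)$ of cardinality $\gamma_{\times k,t}(K(n,r))$ is a clique (i.e., consists of pairwise disjoint $r$-sets).
   Context: For integers $n\ge 2r$, the Kneser graph $K(n,r)$ has as vertices the $r$-element subsets of $[n]=\{1,\dots,n\}$, two vertices being adjacent iff they are disjoint. For a graph $G$ and positive integer $k$, a set $D\subseteq V(G)$ is a $k$-tuple total dominating set if $|N_G(u)\cap D|\ge k$ for every $u\in V(G)$ ($N_G(u)$ the open neighborhood); $\gamma_{\times k,t}(G)$ is the minimum cardinality of such a set (defined when the minimum degree of $G$ is at least $k$). *)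

theory Defs
  imports Main
begin

definition kneser_vertices :: "nat \<Rightarrow> nat \<Rightarrow> nat set set" where
  "kneser_vertices n r = {A. A \<subseteq> {1..n} \<and> card A = r}"

definition kneser_adj :: "nat set \<Rightarrow> nat set \<Rightarrow> bool" where
  "kneser_adj A B \<longleftrightarrow> A \<noteq> B \<and> A \<inter> B = {}"

definition kneser_nbhd :: "nat \<Rightarrow> nat \<Rightarrow> nat set \<Rightarrow> nat set set" where
  "kneser_nbhd n r u = {v \<in> kneser_vertices n r. kneser_adj u v}"

definition is_ktuple_tds :: "nat \<Rightarrow> nat \<Rightarrow> nat \<Rightarrow> nat set set \<Rightarrow> bool" where
  "is_ktuple_tds n r k D \<longleftrightarrow> D \<subseteq> kneser_vertices n r \<and>
     (\<forall>u \<in> kneser_vertices n r. card (kneser_nbhd n r u \<inter> D) \<ge> k)"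

text \<open>k-tuple total domination number (meaningful only when some k-tuple TDS exists,
  i.e. when the minimum degree is at least k).\<close>
definition gamma_ktuple_t :: "nat \<Rightarrow> nat \<Rightarrow> nat \<Rightarrow> nat" where
  "gamma_ktuple_t n r k = (LEAST m. \<exists>D. is_ktuple_tds n r k D \<and> card D = m)"

definition is_kneser_clique :: "nat set set \<Rightarrow> bool" where
  "is_kneser_clique D \<longleftrightarrow> (\<forall>A \<in> D. \<forall>B \<in> D. A \<noteq> B \<longrightarrow> kneser_adj A B)"

end

theory Submission
  imports Defs
begin

text \<open>For a family \<open>D\<close> of r-sets, a vertex u has exactly \<open>|D| - |{B \<in> D. B meets u}|\<close>
  neighbours in \<open>D\<close>. Building u greedily, one new point per step that lies in a member of \<open>D\<close>
  not yet met, gives a vertex meeting \<open>min |D| r\<close> members, so a k-tuple total dominating set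
  has at least k + r elements. If such a set of size k + r had two members sharing a point x,
  starting the greedy construction from x would meet r + 1 members, leaving only k - 1
  neighbours. So the minimum sets are families of k + r pairwise disjoint r-subsets of [n],
  which exist iff n \<ge> r(k + r); conversely every such family is a k-tuple total dominating
  set, because an r-set meets at most r of its members.\<close>

definition meeting :: "'a set set \<Rightarrow> 'a set \<Rightarrow> 'a set set" where
  "meeting D u = {B \<in> D. B \<inter> u \<noteq> {}}"

lemma meeting_subset: "meeting D u \<subseteq> D"
  unfolding meeting_def by blast

lemma meeting_mono: "T \<subseteq> U \<Longrightarrow> meeting D T \<subseteq> meeting D U"
  unfolding meeting_def by blast

lemma exists_insert_meeting_more:
  assumes "finite D" and members: "\<And>B. B \<in> D \<Longrightarrow> B \<noteq> {} \<and> B \<subseteq> X" and "T \<subset> X"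
  shows "\<exists>y \<in> X - T. min (card D) (Suc (card (meeting D T))) \<le> card (meeting D (insert y T))"
proof (cases "meeting D T = D")
  case True
  obtain y where "y \<in> X - T" using \<open>T \<subset> X\<close> by blast
  moreover have "meeting D (insert y T) = D"
    using True meeting_mono[of T "insert y T" D] meeting_subset[of D] by blast
  ultimately show ?thesis by (intro bexI[of _ y]) simp_all
next
  case False
  then obtain B where B: "B \<in> D" "B \<inter> T = {}" unfolding meeting_def by blast
  then obtain y where y: "y \<in> B" "y \<in> X" using members by blast
  have "insert B (meeting D T) \<subseteq> meeting D (insert y T)"
    using B y meeting_mono[of T "insert y T" D] unfolding meeting_def by blast
  moreover have "finite (meeting D (insert y T))"
    using \<open>finite D\<close> meeting_subset finite_subset by blast
  ultimately have "card (insert B (meeting D T)) \<le> card (meeting D (insert y T))"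
    by (rule card_mono[rotated])
  moreover have "B \<notin> meeting D T" "finite (meeting D T)"
    using B \<open>finite D\<close> meeting_subset finite_subset unfolding meeting_def by auto
  ultimately have "Suc (card (meeting D T)) \<le> card (meeting D (insert y T))" by simp
  moreover have "y \<in> X - T" using B y by blast
  ultimately show ?thesis by (intro bexI[of _ y]) simp_all
qed

lemma exists_superset_meeting_many:
  assumes "finite X" "finite D" and members: "\<And>B. B \<in> D \<Longrightarrow> B \<noteq> {} \<and> B \<subseteq> X"
    and "S \<subseteq> X" "card S + j \<le> card X"
  shows "\<exists>T. S \<subseteq> T \<and> T \<subseteq> X \<and> card T = card S + j
           \<and> min (card D) (card (meeting D S) + j) \<le> card (meeting D T)"
  using assms(4,5)
proof (induction j)
  case 0
  then show ?case by auto
next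
  case (Suc j)
  then obtain T where T: "S \<subseteq> T" "T \<subseteq> X" "card T = card S + j"
      "min (card D) (card (meeting D S) + j) \<le> card (meeting D T)"
    by auto
  have "T \<subset> X" using T(2,3) Suc.prems(2) by auto
  then obtain y where y: "y \<in> X - T"
      "min (card D) (Suc (card (meeting D T))) \<le> card (meeting D (insert y T))"
    using exists_insert_meeting_more[OF \<open>finite D\<close> members] by blast
  have "card (insert y T) = card S + Suc j"
    using y(1) T(2,3) \<open>finite X\<close> finite_subset by fastforce
  moreover have "min (card D) (card (meeting D S) + Suc j) \<le> card (meeting D (insert y T))"
    using T(4) y(2) by linarith
  ultimately show ?case using T(1,2) y(1) by (intro exI[of _ "insert y T"]) auto
qed

lemma finite_kneser_vertices: "finite (kneser_vertices n r)"
  by (rule finite_subset[of _ "Pow {1..n}"]) (auto simp: kneser_vertices_def)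

lemma kneser_vertexD: "B \<in> kneser_vertices n r \<Longrightarrow> 1 \<le> r \<Longrightarrow> B \<noteq> {} \<and> B \<subseteq> {1..n}"
  unfolding kneser_vertices_def by auto

lemma kneser_vertex_finite_card: "u \<in> kneser_vertices n r \<Longrightarrow> finite u \<and> card u = r"
  unfolding kneser_vertices_def by (auto intro: finite_subset[OF _ finite_atLeastAtMost])

lemma is_kneser_clique_iff_pairwise_disjnt: "is_kneser_clique D \<longleftrightarrow> pairwise disjnt D"
  unfolding is_kneser_clique_def kneser_adj_def pairwise_def disjnt_def by blast

lemma card_kneser_nbhd_Int:
  assumes "1 \<le> r" "D \<subseteq> kneser_vertices n r"
  shows "card (kneser_nbhd n r u \<inter> D) = card D - card (meeting D u)"
proof -
  have "kneser_nbhd n r u \<inter> D = D - meeting D u"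
    using assms kneser_vertexD
    unfolding kneser_nbhd_def kneser_adj_def meeting_def by fastforce
  then show ?thesis
    using assms(2) finite_kneser_vertices meeting_subset
    by (metis card_Diff_subset finite_subset)
qed

lemma ktuple_tds_card_meeting:
  assumes "1 \<le> r" "is_ktuple_tds n r k D" "u \<in> kneser_vertices n r"
  shows "k + card (meeting D u) \<le> card D"
proof -
  have D: "D \<subseteq> kneser_vertices n r" using assms(2) unfolding is_ktuple_tds_def by blast
  have "k \<le> card D - card (meeting D u)"
    using assms card_kneser_nbhd_Int[OF assms(1) D] unfolding is_ktuple_tds_def by metis
  moreover have "card (meeting D u) \<le> card D"
    using D finite_kneser_vertices meeting_subset by (metis card_mono finite_subset)
  ultimately show ?thesis by linarith
qed

lemma exists_kneser_vertex_meeting_many: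
  assumes "1 \<le> r" "r \<le> n" "D \<subseteq> kneser_vertices n r" "S \<subseteq> {1..n}" "card S \<le> r"
  shows "\<exists>u \<in> kneser_vertices n r.
           min (card D) (card (meeting D S) + (r - card S)) \<le> card (meeting D u)"
proof -
  have "finite D" using assms(3) finite_kneser_vertices finite_subset by blast
  then obtain u where "S \<subseteq> u" "u \<subseteq> {1..n}" "card u = card S + (r - card S)"
      "min (card D) (card (meeting D S) + (r - card S)) \<le> card (meeting D u)"
    using exists_superset_meeting_many[of "{1..n}" D S "r - card S"] assms kneser_vertexD
    by fastforce
  moreover have "u \<in> kneser_vertices n r"
    using calculation(2,3) assms(5) unfolding kneser_vertices_def by simp
  ultimately show ?thesis by blast
qed

lemma ktuple_tds_card_ge:
  assumes "1 \<le> r" "1 \<le> k" "r \<le> n" "is_ktuple_tds n r k D"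
  shows "k + r \<le> card D"
proof -
  have "D \<subseteq> kneser_vertices n r" using assms(4) unfolding is_ktuple_tds_def by blast
  then obtain u where "u \<in> kneser_vertices n r" "min (card D) r \<le> card (meeting D u)"
    using exists_kneser_vertex_meeting_many[of r n D "{}"] assms(1,3) by auto
  then show ?thesis using ktuple_tds_card_meeting[OF assms(1,4)] assms(2) by fastforce
qed

lemma ktuple_tds_card_eq_clique:
  assumes "1 \<le> r" "1 \<le> k" "r \<le> n" "is_ktuple_tds n r k D" and card_D: "card D = k + r"
  shows "is_kneser_clique D"
  unfolding is_kneser_clique_iff_pairwise_disjnt
proof (rule pairwiseI, rule ccontr)
  fix A B assume "A \<in> D" "B \<in> D" "A \<noteq> B" "\<not> disjnt A B"
  then obtain x where x: "x \<in> A" "x \<in> B" unfolding disjnt_def by blast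
  have D: "D \<subseteq> kneser_vertices n r" using assms(4) unfolding is_ktuple_tds_def by blast
  then have "finite (meeting D {x})"
    using finite_kneser_vertices meeting_subset finite_subset by metis
  moreover have "{A, B} \<subseteq> meeting D {x}"
    using \<open>A \<in> D\<close> \<open>B \<in> D\<close> x unfolding meeting_def by blast
  ultimately have "card {A, B} \<le> card (meeting D {x})" by (rule card_mono)
  then have two: "2 \<le> card (meeting D {x})" using \<open>A \<noteq> B\<close> by simp
  have "x \<in> {1..n}" using D \<open>A \<in> D\<close> x(1) kneser_vertexD[OF _ assms(1)] by blast
  then obtain u where u: "u \<in> kneser_vertices n r"
      "min (card D) (card (meeting D {x}) + (r - 1)) \<le> card (meeting D u)"
    using exists_kneser_vertex_meeting_many[OF assms(1,3) D, of "{x}"] assms(1) by auto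
  have "k + card (meeting D u) \<le> card D" by (rule ktuple_tds_card_meeting[OF assms(1,4) u(1)])
  then show False using u(2) two card_D assms(1,2) by linarith
qed

lemma kneser_clique_card_meeting_le:
  assumes "is_kneser_clique D" "finite u"
  shows "card (meeting D u) \<le> card u"
proof -
  define pick where "pick B = (SOME x. x \<in> B \<inter> u)" for B
  have pick: "pick B \<in> B \<inter> u" if B: "B \<in> meeting D u" for B
  proof -
    obtain x where "x \<in> B \<inter> u" using B unfolding meeting_def by blast
    then show ?thesis unfolding pick_def by (rule someI)
  qed
  have "inj_on pick (meeting D u)"
  proof (rule inj_onI, rule ccontr)
    fix B C assume B: "B \<in> meeting D u" and C: "C \<in> meeting D u"
      and "pick B = pick C" "B \<noteq> C"
    have "pairwise disjnt D" using assms(1) is_kneser_clique_iff_pairwise_disjnt by blast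
    then have "disjnt B C"
      using B C \<open>B \<noteq> C\<close> meeting_subset by (meson pairwiseD subsetD)
    then show False using pick[OF B] pick[OF C] \<open>pick B = pick C\<close> unfolding disjnt_def by auto
  qed
  moreover have "pick ` meeting D u \<subseteq> u" using pick by blast
  ultimately show ?thesis using card_inj_on_le assms(2) by blast
qed

lemma kneser_clique_ktuple_tds:
  assumes "1 \<le> r" "D \<subseteq> kneser_vertices n r" "is_kneser_clique D" "k + r \<le> card D"
  shows "is_ktuple_tds n r k D"
  unfolding is_ktuple_tds_def
proof (intro conjI ballI assms(2))
  fix u assume "u \<in> kneser_vertices n r"
  then have "card (meeting D u) \<le> r"
    using kneser_clique_card_meeting_le[OF assms(3)] kneser_vertex_finite_card by metis
  then show "k \<le> card (kneser_nbhd n r u \<inter> D)"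
    using card_kneser_nbhd_Int[OF assms(1,2)] assms(4) by simp
qed

lemma kneser_clique_card_le:
  assumes "D \<subseteq> kneser_vertices n r" "is_kneser_clique D"
  shows "r * card D \<le> n"
proof -
  have "pairwise disjnt D" using assms(2) is_kneser_clique_iff_pairwise_disjnt by blast
  moreover have "finite B" if "B \<in> D" for B
    using that assms(1) kneser_vertex_finite_card by blast
  ultimately have "card (\<Union>D) = (\<Sum>B\<in>D. card B)" by (rule card_Union_disjoint)
  also have "\<dots> = (\<Sum>B\<in>D. r)"
    using assms(1) kneser_vertex_finite_card by (intro sum.cong) auto
  also have "\<dots> = r * card D" by simp
  finally have "card (\<Union>D) = r * card D" .
  moreover have "card (\<Union>D) \<le> card {1..n}"
    using assms(1) unfolding kneser_vertices_def by (intro card_mono) auto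
  ultimately show ?thesis by simp
qed

lemma block_index: "r * i < x \<Longrightarrow> x \<le> r * i + r \<Longrightarrow> (x - 1) div r = (i::nat)"
  by (rule div_nat_eqI) auto

lemma exists_kneser_clique:
  assumes "1 \<le> r" "r * m \<le> n"
  shows "\<exists>D \<subseteq> kneser_vertices n r. is_kneser_clique D \<and> card D = m"
proof -
  define block where "block i = {r * i <.. r * i + r}" for i
  have index: "(x - 1) div r = i" if "x \<in> block i" for x i
    using that block_index unfolding block_def by simp
  have "block i \<noteq> {}" for i using assms(1) unfolding block_def by simp
  then have "inj_on block {..<m}" by (metis inj_onI index ex_in_conv)
  then have "card (block ` {..<m}) = m" by (simp add: card_image)
  moreover have "pairwise disjnt (block ` {..<m})"
    by (auto simp: pairwise_def disjnt_def dest: index)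
  moreover have "block ` {..<m} \<subseteq> kneser_vertices n r"
  proof clarify
    fix i assume "i < m"
    then have "r * i + r \<le> n" using assms(2) mult_le_mono2[of "Suc i" m r] by simp
    then show "block i \<in> kneser_vertices n r"
      unfolding block_def kneser_vertices_def by auto
  qed
  ultimately show ?thesis unfolding is_kneser_clique_iff_pairwise_disjnt by blast
qed

lemma gamma_ktuple_t_eqI:
  assumes "is_ktuple_tds n r k D" "card D = m" "\<And>D. is_ktuple_tds n r k D \<Longrightarrow> m \<le> card D"
  shows "gamma_ktuple_t n r k = m"
  unfolding gamma_ktuple_t_def
proof (rule Least_equality)
  show "\<exists>D. is_ktuple_tds n r k D \<and> card D = m" using assms(1,2) by blast
  show "m \<le> m'" if "\<exists>D. is_ktuple_tds n r k D \<and> card D = m'" for m'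
    using that assms(3) by blast
qed

lemma ex_ktuple_tds_card_gamma:
  assumes "\<exists>D. is_ktuple_tds n r k D"
  shows "\<exists>D. is_ktuple_tds n r k D \<and> card D = gamma_ktuple_t n r k"
  unfolding gamma_ktuple_t_def by (rule LeastI_ex) (use assms in blast)

theorem theorem3p2:
  fixes n r k :: nat
  assumes "r \<ge> 1" and "k \<ge> 1" and "n \<ge> 2 * r"
  shows "(((\<exists>D. is_ktuple_tds n r k D) \<and> gamma_ktuple_t n r k = k + r)
            \<longleftrightarrow> n \<ge> r * (k + r))
       \<and> (n \<ge> r * (k + r) \<longrightarrow>
            (\<forall>D. is_ktuple_tds n r k D \<and> card D = gamma_ktuple_t n r k
                 \<longrightarrow> is_kneser_clique D))"
proof -
  have "r \<le> n" using assms(3) by simp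
  note tight_clique = ktuple_tds_card_eq_clique[OF assms(1,2) \<open>r \<le> n\<close>]
  have sufficient: "(\<exists>D. is_ktuple_tds n r k D) \<and> gamma_ktuple_t n r k = k + r"
    if big: "r * (k + r) \<le> n"
  proof -
    obtain D where D: "D \<subseteq> kneser_vertices n r" "is_kneser_clique D" "card D = k + r"
      using exists_kneser_clique[OF assms(1) big] by blast
    then have tds: "is_ktuple_tds n r k D" by (intro kneser_clique_ktuple_tds[OF assms(1)]) simp_all
    have "gamma_ktuple_t n r k = k + r"
      using tds D(3) ktuple_tds_card_ge[OF assms(1,2) \<open>r \<le> n\<close>] by (rule gamma_ktuple_t_eqI)
    with tds show ?thesis by blast
  qed
  have necessary: "r * (k + r) \<le> n"
    if tight: "(\<exists>D. is_ktuple_tds n r k D) \<and> gamma_ktuple_t n r k = k + r"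
  proof -
    obtain D where D: "is_ktuple_tds n r k D" "card D = k + r"
      using ex_ktuple_tds_card_gamma[of n r k] tight by auto
    then have "D \<subseteq> kneser_vertices n r" unfolding is_ktuple_tds_def by blast
    then have "r * card D \<le> n" using kneser_clique_card_le tight_clique[OF D] by blast
    with D(2) show ?thesis by simp
  qed
  show ?thesis
  proof (intro conjI iffI impI allI)
    fix D assume "r * (k + r) \<le> n" "is_ktuple_tds n r k D \<and> card D = gamma_ktuple_t n r k"
    then show "is_kneser_clique D" using sufficient tight_clique by simp
  qed (use sufficient necessary in blast)+
qed

end
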